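(* For $i\in\{0,1,\dots,m\}$ let $q_i(y)=y^\top A_iy+2b_i^\top y+c_i$ with $A_i\in\mathbb{S}^{n-1}$, $b_i\in\mathbb{R}^{n-1}$, $c_i\in\mathbb{R}$. For $i\in\{1,\dots,m\}$ let $M_i=\begin{pmatrix}c_i & b_i^\top\\ b_i & A_i\end{pmatrix}$, $\mathcal{M}=\{M_1,\dots,M_m\}$, and $\mathcal{Y}=\{y\in\mathbb{R}^{n-1}:q_i(y)\ge0\ \forall i\in\{1,\dots,m\}\}$. Suppose there exists $\lambda^*\in\mathbb{R}^m_+$ such that $A_0-\sum_{i=1}^m\lambda^*_iA_i$ is positive semidefinite. If $\mathcal{S}(\mathcal{M})$ is rank-one generated, then the closed convex hull of $\mathrm{epi}=\{(y,t)\in\mathbb{R}^{n-1}\times\mathbb{R}: q_0(y)\le t,\ y\in\mathcal{Y}\}$ is $$\mathrm{clconv}(\mathrm{epi})=\mathrm{cl}\left(\left\{(y,t):\ \exists\,Y\succeq yy^\top,\ \langle A_0,Y\rangle+2\langle b_0,y\rangle+c_0\le t,\ \langle A_i,Y\rangle+2\langle b_i,y\rangle+c_i\ge0\ \forall i\in\{1,\dots,m\}\right\}\right).$$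
   Context: $\mathbb{S}^n$ denotes real symmetric $n\times n$ matrices with $\langle A,B\rangle=\mathrm{tr}(AB)$, $\mathbb{S}^n_+$ the PSD cone, $Y\succeq Z$ means $Y-Z$ is PSD, $\mathrm{cl}$ is closure and $\mathrm{clconv}$ closed convex hull. For $\mathcal{M}\subseteq\mathbb{S}^n$, $\mathcal{S}(\mathcal{M})=\{X\in\mathbb{S}^n_+:\langle M,X\rangle\ge0\ \forall M\in\mathcal{M}\}$. A closed convex cone $\mathcal{S}\subseteq\mathbb{S}^n_+$ is rank-one generated (ROG) if $\mathcal{S}=\mathrm{conv}(\mathcal{S}\cap\{xx^\top:x\in\mathbb{R}^n\})$. *)

theory Defs
  imports "HOL-Analysis.Analysis"
begin

definition sym_mat :: "real^'k^'k \<Rightarrow> bool" where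
  "sym_mat X \<longleftrightarrow> transpose X = X"

definition psd :: "real^'k^'k \<Rightarrow> bool" where
  "psd X \<longleftrightarrow> sym_mat X \<and> (\<forall>x. 0 \<le> x \<bullet> (X *v x))"

definition frob :: "real^'k^'k \<Rightarrow> real^'k^'k \<Rightarrow> real" where
  "frob A B = trace (A ** B)"

definition outer :: "real^'k \<Rightarrow> real^'k^'k" where
  "outer x = (\<chi> i j. x $ i * x $ j)"

definition S_of :: "(real^'k^'k) set \<Rightarrow> (real^'k^'k) set" where
  "S_of \<M> = {X. psd X \<and> (\<forall>M\<in>\<M>. 0 \<le> frob M X)}"

definition ROG :: "(real^'k^'k) set \<Rightarrow> bool" where
  "ROG S \<longleftrightarrow> closed S \<and> convex S \<and> cone S \<and> S \<subseteq> Collect psd \<and>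
      S = convex hull (S \<inter> range outer)"

text \<open>Homogenized matrix [[c, b^T],[b, A]], first row/column indexed by None.\<close>
definition hom_mat :: "real^'n^'n \<Rightarrow> real^'n \<Rightarrow> real \<Rightarrow> real^('n option)^('n option)" where
  "hom_mat A b c = (\<chi> i j. case (i, j) of
      (None, None) \<Rightarrow> c
    | (None, Some l) \<Rightarrow> b $ l
    | (Some k, None) \<Rightarrow> b $ k
    | (Some k, Some l) \<Rightarrow> A $ k $ l)"

definition qf :: "real^'n^'n \<Rightarrow> real^'n \<Rightarrow> real \<Rightarrow> real^'n \<Rightarrow> real" where
  "qf A b c y = y \<bullet> (A *v y) + 2 * (b \<bullet> y) + c"

end

theory Submission
  imports Defs
begin

text \<open>
  The Shor relaxation is convex and contains the epigraph, so it contains its convex hull.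
  Conversely, a point (y, t) of the relaxation with witness Y gives the matrix
  W = [[1, y^T], [y, Y]] \<in> S(M), which by rank-one generatedness is a nonnegative combination
  of matrices x x^T \<in> S(M). Writing x = (\<alpha>, z), each term with \<alpha> \<noteq> 0 yields the feasible point
  z / \<alpha> with weight \<theta> \<alpha>^2; the corner and border entries of W say that these weights sum to 1
  and average to y. A term with \<alpha> = 0 is a recession direction with z^T A_i z \<ge> 0 for all i \<ge> 1,
  hence z^T A_0 z \<ge> 0 by the multiplier \<lambda>*, so dropping it only lowers the objective.
  Thus the convex hull of the epigraph equals the relaxation even before taking closures.
\<close>

definition tail_vec :: "real^('n option) \<Rightarrow> real^'n" where
  "tail_vec x = (\<chi> j. x $ Some j)"

lemma frob_outer: "frob M (outer x) = x \<bullet> (M *v x)"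
  by (simp add: frob_def trace_def matrix_matrix_mult_def outer_def inner_vec_def
      matrix_vector_mult_def sum_distrib_left algebra_simps)

lemma linear_frob: "linear (frob M)"
  by (rule linearI)
    (simp_all add: frob_def trace_def matrix_matrix_mult_def sum.distrib sum_distrib_left algebra_simps)

lemma frob_sum_scaleR_outer:
  "frob M (\<Sum>x\<in>F. \<theta> x *\<^sub>R outer x) = (\<Sum>x\<in>F. \<theta> x * (x \<bullet> (M *v x)))"
  by (simp add: linear_sum[OF linear_frob] linear_scale[OF linear_frob] frob_outer)

lemma linear_quadratic_form: "linear (\<lambda>M. (x::real^'n) \<bullet> (M *v x))"
  by (rule linearI) (simp_all add: matrix_vector_mult_add_rdistrib inner_add_right
      flip: scaleR_matrix_vector_assoc)

lemma quadratic_form_outer: "x \<bullet> (outer y *v x) = (y \<bullet> x)\<^sup>2"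
  by (simp add: outer_def inner_vec_def matrix_vector_mult_def power2_eq_square
      sum_product sum_distrib_left algebra_simps)

lemma psd_add: "psd X \<Longrightarrow> psd Y \<Longrightarrow> psd (X + Y)"
  by (simp add: psd_def sym_mat_def transpose_def vec_eq_iff
      linear_add[OF linear_quadratic_form])

lemma psd_scaleR: "0 \<le> a \<Longrightarrow> psd X \<Longrightarrow> psd (a *\<^sub>R X)"
  by (simp add: psd_def sym_mat_def transpose_scalar linear_scale[OF linear_quadratic_form])

lemma psd_outer: "psd (outer y)"
  unfolding psd_def
  by (simp add: quadratic_form_outer) (simp add: sym_mat_def transpose_def vec_eq_iff outer_def)

lemma quadratic_form_hom_mat:
  "x \<bullet> (hom_mat A b c *v x) =
     c * (x $ None)\<^sup>2 + 2 * x $ None * (b \<bullet> tail_vec x) + tail_vec x \<bullet> (A *v tail_vec x)"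
  by (simp add: inner_vec_def matrix_vector_mult_def hom_mat_def tail_vec_def UNIV_option_conv
      sum.reindex sum.distrib sum_distrib_left sum_distrib_right power2_eq_square algebra_simps)

lemma quadratic_form_hom_mat_dehomogenize:
  assumes "x $ None \<noteq> 0"
  shows "x \<bullet> (hom_mat A b c *v x) = (x $ None)\<^sup>2 * qf A b c ((1 / x $ None) *\<^sub>R tail_vec x)"
  using assms
  by (simp add: quadratic_form_hom_mat qf_def matrix_vector_mult_scaleR field_simps power2_eq_square)

lemma quadratic_form_hom_mat_at_infinity:
  "x $ None = 0 \<Longrightarrow> x \<bullet> (hom_mat A b c *v x) = tail_vec x \<bullet> (A *v tail_vec x)"
  by (simp add: quadratic_form_hom_mat)

lemma frob_hom_mat_hom_mat:
  "frob (hom_mat A b c) (hom_mat Y y 1) = frob A Y + 2 * (b \<bullet> y) + c"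
  by (simp add: frob_def trace_def matrix_matrix_mult_def hom_mat_def inner_vec_def UNIV_option_conv
      sum.reindex sum.distrib algebra_simps)

lemma psd_hom_mat:
  assumes "psd (Y - outer y)"
  shows "psd (hom_mat Y y 1)"
proof -
  have "transpose Y = Y"
    using assms by (simp add: psd_def sym_mat_def vec_eq_iff transpose_def outer_def mult.commute)
  then have "sym_mat (hom_mat Y y 1)"
    by (auto simp: sym_mat_def vec_eq_iff transpose_def hom_mat_def split: option.splits)
  moreover have "0 \<le> x \<bullet> (hom_mat Y y 1 *v x)" for x
  proof -
    have "x \<bullet> (hom_mat Y y 1 *v x) =
        (x $ None + y \<bullet> tail_vec x)\<^sup>2 + tail_vec x \<bullet> ((Y - outer y) *v tail_vec x)"
      by (simp add: quadratic_form_hom_mat linear_diff[OF linear_quadratic_form]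
          quadratic_form_outer power2_eq_square algebra_simps)
    then show ?thesis
      using assms by (simp add: psd_def)
  qed
  ultimately show ?thesis
    by (simp add: psd_def)
qed

lemma sum_scaleR_outer_eq_hom_mat:
  assumes "(\<Sum>x\<in>F. \<theta> x *\<^sub>R outer x) = hom_mat Y y 1"
  shows "(\<Sum>x\<in>F. \<theta> x * (x $ None)\<^sup>2) = 1"
    and "(\<Sum>x\<in>F. (\<theta> x * x $ None) *\<^sub>R tail_vec x) = y"
proof -
  show "(\<Sum>x\<in>F. \<theta> x * (x $ None)\<^sup>2) = 1"
    using arg_cong[OF assms, of "\<lambda>W. W $ None $ None"]
    by (simp add: outer_def hom_mat_def power2_eq_square)
  show "(\<Sum>x\<in>F. (\<theta> x * x $ None) *\<^sub>R tail_vec x) = y"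
    unfolding vec_eq_iff
  proof
    fix j
    show "(\<Sum>x\<in>F. (\<theta> x * x $ None) *\<^sub>R tail_vec x) $ j = y $ j"
      using arg_cong[OF assms, of "\<lambda>W. W $ None $ Some j"]
      by (simp add: outer_def hom_mat_def tail_vec_def mult.assoc)
  qed
qed

lemma ROG_rank_one_decomposition:
  assumes "ROG S" and "W \<in> S"
  obtains F :: "(real^'k) set" and \<theta>
  where "finite F" "\<forall>x\<in>F. 0 \<le> \<theta> x \<and> outer x \<in> S" "(\<Sum>x\<in>F. \<theta> x *\<^sub>R outer x) = W"
proof -
  have "W \<in> convex hull (S \<inter> range outer)"
    using assms by (simp add: ROG_def)
  then obtain G \<mu> where G: "finite G" "G \<subseteq> S \<inter> range outer" "\<forall>V\<in>G. 0 \<le> \<mu> V"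
      "(\<Sum>V\<in>G. \<mu> V *\<^sub>R V) = W"
    unfolding convex_hull_explicit by blast
  have "\<forall>V\<in>G. \<exists>x. outer x = V"
    using G(2) by blast
  then obtain root where root: "\<forall>V\<in>G. outer (root V) = V"
    by (rule bchoice [THEN exE])
  have "inj_on root G"
    using root by (intro inj_on_inverseI[where g = outer]) auto
  then have "(\<Sum>x\<in>root ` G. \<mu> (outer x) *\<^sub>R outer x) = (\<Sum>V\<in>G. \<mu> (outer (root V)) *\<^sub>R outer (root V))"
    by (simp add: sum.reindex)
  also have "\<dots> = W"
    using G(4) root by simp
  finally have "(\<Sum>x\<in>root ` G. \<mu> (outer x) *\<^sub>R outer x) = W" .
  moreover have "\<forall>x\<in>root ` G. 0 \<le> \<mu> (outer x) \<and> outer x \<in> S"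
    using G(2,3) root by auto
  ultimately show ?thesis
    using G(1) by (intro that[of "root ` G"]) auto
qed

lemma quadratic_form_nonneg_of_psd_combination:
  fixes z :: "real^'n"
  assumes "\<forall>i\<in>I. 0 \<le> lam i" and "psd (A0 - (\<Sum>i\<in>I. lam i *\<^sub>R A i))"
    and "\<forall>i\<in>I. 0 \<le> z \<bullet> (A i *v z)"
  shows "0 \<le> z \<bullet> (A0 *v z)"
proof -
  have "0 \<le> z \<bullet> ((A0 - (\<Sum>i\<in>I. lam i *\<^sub>R A i)) *v z)"
    using assms(2) by (simp add: psd_def)
  also have "\<dots> = z \<bullet> (A0 *v z) - (\<Sum>i\<in>I. lam i * (z \<bullet> (A i *v z)))"
    by (simp add: linear_diff[OF linear_quadratic_form] linear_sum[OF linear_quadratic_form]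
        linear_scale[OF linear_quadratic_form])
  finally show ?thesis
    using sum_nonneg[of I "\<lambda>i. lam i * (z \<bullet> (A i *v z))"] assms(1,3) by simp
qed

lemma mem_convex_hull_epigraphI:
  fixes p :: "'i \<Rightarrow> 'a::real_vector"
  assumes "finite I" "\<forall>i\<in>I. 0 \<le> w i" "sum w I = 1" "\<forall>i\<in>I. P (p i)"
    and "(\<Sum>i\<in>I. w i *\<^sub>R p i) = y" "(\<Sum>i\<in>I. w i * f (p i)) \<le> t"
  shows "(y, t) \<in> convex hull {(y, t). f y \<le> t \<and> P y}"
proof -
  define d where "d = t - (\<Sum>i\<in>I. w i * f (p i))"
  have "(\<Sum>i\<in>I. w i *\<^sub>R (p i, f (p i) + d)) \<in> convex hull {(y, t). f y \<le> t \<and> P y}"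
  proof (rule convex_sum[OF assms(1) convex_convex_hull])
    show "sum w I = 1" by (fact assms(3))
    fix i assume "i \<in> I"
    then show "0 \<le> w i" "(p i, f (p i) + d) \<in> convex hull {(y, t). f y \<le> t \<and> P y}"
      using assms(2,4,6) by (auto simp: d_def intro!: hull_inc)
  qed
  moreover have "(\<Sum>i\<in>I. w i *\<^sub>R (p i, f (p i) + d)) = (y, t)"
  proof -
    have "(\<Sum>i\<in>I. w i * (f (p i) + d)) = (\<Sum>i\<in>I. w i * f (p i)) + sum w I * d"
      by (simp add: distrib_left sum.distrib sum_distrib_right)
    then show ?thesis
      using assms(3,5) by (simp add: fst_sum snd_sum prod_eq_iff d_def)
  qed
  ultimately show ?thesis
    by simp
qed

definition qcqp_epigraph ::
  "(nat \<Rightarrow> real^'n^'n) \<Rightarrow> (nat \<Rightarrow> real^'n) \<Rightarrow> (nat \<Rightarrow> real) \<Rightarrow> nat set \<Rightarrow> ((real^'n) \<times> real) set"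
  where "qcqp_epigraph A b c I =
           {(y, t). qf (A 0) (b 0) (c 0) y \<le> t \<and> (\<forall>i\<in>I. 0 \<le> qf (A i) (b i) (c i) y)}"

definition shor_relaxation ::
  "(nat \<Rightarrow> real^'n^'n) \<Rightarrow> (nat \<Rightarrow> real^'n) \<Rightarrow> (nat \<Rightarrow> real) \<Rightarrow> nat set \<Rightarrow> ((real^'n) \<times> real) set"
  where "shor_relaxation A b c I = {(y, t). \<exists>Y. psd (Y - outer y) \<and>
            frob (A 0) Y + 2 * (b 0 \<bullet> y) + c 0 \<le> t \<and>
            (\<forall>i\<in>I. frob (A i) Y + 2 * (b i \<bullet> y) + c i \<ge> 0)}"

lemma psd_sub_outer_convex_combination:
  assumes "psd (Y1 - outer y1)" "psd (Y2 - outer y2)" "0 \<le> u" "0 \<le> v" "u + v = 1"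
  shows "psd (u *\<^sub>R Y1 + v *\<^sub>R Y2 - outer (u *\<^sub>R y1 + v *\<^sub>R y2))"
proof -
  have v: "v = 1 - u"
    using assms(5) by simp
  have "u *\<^sub>R Y1 + v *\<^sub>R Y2 - outer (u *\<^sub>R y1 + v *\<^sub>R y2) =
      u *\<^sub>R (Y1 - outer y1) + v *\<^sub>R (Y2 - outer y2) + (u * v) *\<^sub>R outer (y1 - y2)"
    unfolding v by (simp add: vec_eq_iff outer_def algebra_simps)
  then show ?thesis
    using assms by (simp add: psd_add psd_scaleR psd_outer)
qed

lemma convex_shor_relaxation: "convex (shor_relaxation A b c I)"
proof (rule convexI)
  fix p q and u v :: real
  assume "p \<in> shor_relaxation A b c I" "q \<in> shor_relaxation A b c I"
    and uv: "0 \<le> u" "0 \<le> v" "u + v = 1"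
  then obtain y1 t1 Y1 y2 t2 Y2 where pq: "p = (y1, t1)" "q = (y2, t2)"
    and Y1: "psd (Y1 - outer y1)" "frob (A 0) Y1 + 2 * (b 0 \<bullet> y1) + c 0 \<le> t1"
      "\<forall>i\<in>I. frob (A i) Y1 + 2 * (b i \<bullet> y1) + c i \<ge> 0"
    and Y2: "psd (Y2 - outer y2)" "frob (A 0) Y2 + 2 * (b 0 \<bullet> y2) + c 0 \<le> t2"
      "\<forall>i\<in>I. frob (A i) Y2 + 2 * (b i \<bullet> y2) + c i \<ge> 0"
    unfolding shor_relaxation_def by auto
  define Y where "Y = u *\<^sub>R Y1 + v *\<^sub>R Y2"
  have affine: "frob (A i) Y + 2 * (b i \<bullet> (u *\<^sub>R y1 + v *\<^sub>R y2)) + c i =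
      u * (frob (A i) Y1 + 2 * (b i \<bullet> y1) + c i) + v * (frob (A i) Y2 + 2 * (b i \<bullet> y2) + c i)" for i
  proof -
    have "c i = u * c i + v * c i"
      using uv(3) by (metis distrib_right mult_1)
    then show ?thesis
      unfolding Y_def by (simp add: linear_add[OF linear_frob] linear_scale[OF linear_frob]
          inner_add_right algebra_simps)
  qed
  have "psd (Y - outer (u *\<^sub>R y1 + v *\<^sub>R y2))"
    unfolding Y_def using Y1(1) Y2(1) uv by (rule psd_sub_outer_convex_combination)
  moreover have "frob (A 0) Y + 2 * (b 0 \<bullet> (u *\<^sub>R y1 + v *\<^sub>R y2)) + c 0 \<le> u * t1 + v * t2"
    unfolding affine using Y1(2) Y2(2) uv by (intro add_mono mult_left_mono) auto
  moreover have "\<forall>i\<in>I. frob (A i) Y + 2 * (b i \<bullet> (u *\<^sub>R y1 + v *\<^sub>R y2)) + c i \<ge> 0"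
    unfolding affine using Y1(3) Y2(3) uv by auto
  ultimately show "u *\<^sub>R p + v *\<^sub>R q \<in> shor_relaxation A b c I"
    unfolding shor_relaxation_def pq by auto
qed

lemma qcqp_epigraph_subset_shor_relaxation: "qcqp_epigraph A b c I \<subseteq> shor_relaxation A b c I"
proof -
  have "psd (outer y - outer y)" for y :: "real^'n"
    using psd_scaleR[OF _ psd_outer, of 0 y] by simp
  then show ?thesis
    unfolding qcqp_epigraph_def shor_relaxation_def
    by (auto simp: frob_outer qf_def intro!: exI[of _ "outer _"])
qed

lemma rank_one_decomposition_mem_convex_hull_qcqp_epigraph:
  fixes A :: "nat \<Rightarrow> real^'n^'n" and F :: "(real^('n option)) set"
  assumes "finite F" and "\<forall>x\<in>F. 0 \<le> \<theta> x"
    and decomp: "(\<Sum>x\<in>F. \<theta> x *\<^sub>R outer x) = hom_mat Y y 1"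
    and feasible: "\<forall>x\<in>F. \<forall>i\<in>I. 0 \<le> x \<bullet> (hom_mat (A i) (b i) (c i) *v x)"
    and recession: "\<forall>x\<in>F. x $ None = 0 \<longrightarrow> 0 \<le> x \<bullet> (hom_mat (A 0) (b 0) (c 0) *v x)"
    and objective: "(\<Sum>x\<in>F. \<theta> x * (x \<bullet> (hom_mat (A 0) (b 0) (c 0) *v x))) \<le> t"
  shows "(y, t) \<in> convex hull (qcqp_epigraph A b c I)"
proof -
  define F1 where "F1 = {x\<in>F. x $ None \<noteq> 0}"
  define w where "w x = \<theta> x * (x $ None)\<^sup>2" for x :: "real^('n option)"
  define p where "p x = (1 / x $ None) *\<^sub>R tail_vec x" for x :: "real^('n option)"
  have F1: "finite F1" "F1 \<subseteq> F"
    using assms(1) by (auto simp: F1_def)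
  have dehomogenize: "x \<bullet> (hom_mat (A i) (b i) (c i) *v x) = (x $ None)\<^sup>2 * qf (A i) (b i) (c i) (p x)"
    if "x \<in> F1" for x i
    using that by (simp add: F1_def p_def quadratic_form_hom_mat_dehomogenize)
  show ?thesis
    unfolding qcqp_epigraph_def
  proof (rule mem_convex_hull_epigraphI[OF F1(1)])
    show "\<forall>x\<in>F1. 0 \<le> w x"
      using assms(2) F1(2) by (auto simp: w_def)
    have "sum w F1 = sum w F"
      by (rule sum.mono_neutral_left[OF assms(1) F1(2)]) (auto simp: F1_def w_def)
    then show "sum w F1 = 1"
      using sum_scaleR_outer_eq_hom_mat(1)[OF decomp] by (simp add: w_def)
    show "\<forall>x\<in>F1. \<forall>i\<in>I. 0 \<le> qf (A i) (b i) (c i) (p x)"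
      using feasible F1(2) dehomogenize by (fastforce simp: F1_def zero_le_mult_iff)
    have "(\<Sum>x\<in>F1. w x *\<^sub>R p x) = (\<Sum>x\<in>F1. (\<theta> x * x $ None) *\<^sub>R tail_vec x)"
      by (rule sum.cong) (auto simp: F1_def w_def p_def power2_eq_square)
    also have "\<dots> = (\<Sum>x\<in>F. (\<theta> x * x $ None) *\<^sub>R tail_vec x)"
      by (rule sum.mono_neutral_left[OF assms(1) F1(2)]) (auto simp: F1_def)
    finally show "(\<Sum>x\<in>F1. w x *\<^sub>R p x) = y"
      using sum_scaleR_outer_eq_hom_mat(2)[OF decomp] by simp
    have "(\<Sum>x\<in>F1. w x * qf (A 0) (b 0) (c 0) (p x)) =
        (\<Sum>x\<in>F1. \<theta> x * (x \<bullet> (hom_mat (A 0) (b 0) (c 0) *v x)))"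
      by (rule sum.cong) (simp_all add: w_def dehomogenize)
    also have "\<dots> \<le> (\<Sum>x\<in>F. \<theta> x * (x \<bullet> (hom_mat (A 0) (b 0) (c 0) *v x)))"
      using assms(2) recession by (intro sum_mono2[OF assms(1) F1(2)]) (auto simp: F1_def)
    finally show "(\<Sum>x\<in>F1. w x * qf (A 0) (b 0) (c 0) (p x)) \<le> t"
      using objective by linarith
  qed
qed

lemma hom_mat_in_S_of:
  assumes "psd (Y - outer y)" and "\<forall>i\<in>I. frob (A i) Y + 2 * (b i \<bullet> y) + c i \<ge> 0"
  shows "hom_mat Y y 1 \<in> S_of {hom_mat (A i) (b i) (c i) | i. i \<in> I}"
  using assms by (auto simp: S_of_def psd_hom_mat frob_hom_mat_hom_mat)

lemma shor_relaxation_subset_convex_hull_qcqp_epigraph: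
  fixes A :: "nat \<Rightarrow> real^'n^'n"
  assumes lam: "\<forall>i\<in>I. 0 \<le> lam i" "psd (A 0 - (\<Sum>i\<in>I. lam i *\<^sub>R A i))"
    and rog: "ROG (S_of {hom_mat (A i) (b i) (c i) | i. i \<in> I})"
  shows "shor_relaxation A b c I \<subseteq> convex hull (qcqp_epigraph A b c I)"
proof (rule subsetI, unfold split_paired_all)
  fix y t
  assume "(y, t) \<in> shor_relaxation A b c I"
  then obtain Y where Y: "psd (Y - outer y)" "frob (A 0) Y + 2 * (b 0 \<bullet> y) + c 0 \<le> t"
    "\<forall>i\<in>I. frob (A i) Y + 2 * (b i \<bullet> y) + c i \<ge> 0"
    unfolding shor_relaxation_def by blast
  obtain F :: "(real^('n option)) set" and \<theta>
    where F: "finite F" "\<forall>x\<in>F. 0 \<le> \<theta> x \<and> outer x \<in> S_of {hom_mat (A i) (b i) (c i) | i. i \<in> I}"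
      and decomp: "(\<Sum>x\<in>F. \<theta> x *\<^sub>R outer x) = hom_mat Y y 1"
    by (rule ROG_rank_one_decomposition[OF rog hom_mat_in_S_of[OF Y(1,3)]])
  have "0 \<le> frob (hom_mat (A i) (b i) (c i)) (outer x)" if "x \<in> F" "i \<in> I" for x i
    using F(2) that unfolding S_of_def by blast
  then have feasible: "\<forall>x\<in>F. \<forall>i\<in>I. 0 \<le> x \<bullet> (hom_mat (A i) (b i) (c i) *v x)"
    by (simp add: frob_outer)
  have "0 \<le> x \<bullet> (hom_mat (A 0) (b 0) (c 0) *v x)" if "x \<in> F" "x $ None = 0" for x
  proof -
    have "\<forall>i\<in>I. 0 \<le> tail_vec x \<bullet> (A i *v tail_vec x)"
      using feasible that(1) quadratic_form_hom_mat_at_infinity[OF that(2)] by metis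
    then show ?thesis
      using that(2) lam by (simp add: quadratic_form_hom_mat_at_infinity
          quadratic_form_nonneg_of_psd_combination)
  qed
  moreover have "(\<Sum>x\<in>F. \<theta> x * (x \<bullet> (hom_mat (A 0) (b 0) (c 0) *v x))) \<le> t"
    using Y(2) by (simp flip: frob_sum_scaleR_outer add: decomp frob_hom_mat_hom_mat)
  ultimately show "(y, t) \<in> convex hull (qcqp_epigraph A b c I)"
    using F(2) by (intro rank_one_decomposition_mem_convex_hull_qcqp_epigraph[OF F(1) _ decomp feasible])
      auto
qed

lemma convex_hull_qcqp_epigraph_eq_shor_relaxation:
  fixes A :: "nat \<Rightarrow> real^'n^'n"
  assumes "\<forall>i\<in>I. 0 \<le> lam i" "psd (A 0 - (\<Sum>i\<in>I. lam i *\<^sub>R A i))"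
    and "ROG (S_of {hom_mat (A i) (b i) (c i) | i. i \<in> I})"
  shows "convex hull (qcqp_epigraph A b c I) = shor_relaxation A b c I"
proof (rule subset_antisym)
  show "convex hull (qcqp_epigraph A b c I) \<subseteq> shor_relaxation A b c I"
    by (intro hull_minimal qcqp_epigraph_subset_shor_relaxation convex_shor_relaxation)
  show "shor_relaxation A b c I \<subseteq> convex hull (qcqp_epigraph A b c I)"
    using assms by (rule shor_relaxation_subset_convex_hull_qcqp_epigraph)
qed

theorem corollary5p11:
  fixes A :: "nat \<Rightarrow> real^'n^'n" and b :: "nat \<Rightarrow> real^'n" and c :: "nat \<Rightarrow> real"
    and m :: nat
  assumes symA: "\<And>i. i \<le> m \<Longrightarrow> sym_mat (A i)"
    and lam: "\<exists>lam::nat \<Rightarrow> real. (\<forall>i\<in>{1..m}. 0 \<le> lam i) \<and>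
                 psd (A 0 - (\<Sum>i=1..m. lam i *\<^sub>R A i))"
    and rog: "ROG (S_of {hom_mat (A i) (b i) (c i) | i. i \<in> {1..m}})"
  shows "closure (convex hull {(y, t). qf (A 0) (b 0) (c 0) y \<le> t \<and>
                                      (\<forall>i\<in>{1..m}. 0 \<le> qf (A i) (b i) (c i) y)})
       = closure {(y, t). \<exists>Y. psd (Y - outer y) \<and>
                    frob (A 0) Y + 2 * (b 0 \<bullet> y) + c 0 \<le> t \<and>
                    (\<forall>i\<in>{1..m}. frob (A i) Y + 2 * (b i \<bullet> y) + c i \<ge> 0)}"
proof -
  \<comment> \<open>\<open>symA\<close> is unused: the argument works verbatim for arbitrary square matrices.\<close>
  obtain lam where "\<forall>i\<in>{1..m}. 0 \<le> lam i" "psd (A 0 - (\<Sum>i=1..m. lam i *\<^sub>R A i))"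
    using lam by blast
  then have "convex hull (qcqp_epigraph A b c {1..m}) = shor_relaxation A b c {1..m}"
    using rog by (rule convex_hull_qcqp_epigraph_eq_shor_relaxation)
  then show ?thesis
    by (simp add: qcqp_epigraph_def shor_relaxation_def)
qed

end
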